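(* Let $N\ge1$ and $0<k\le N$, and let $\mathfrak D(N,k)$ be the set of skew-Hermitian $N\times N$ complex matrices $A$ such that $A_{ij}=0$ unless $k$ divides $i-j$. Then $\mathfrak D(N,k)$ is a real Lie subalgebra of $\mathfrak u(N)$ and, with $d=\lfloor N/k\rfloor$ and $r=N-kd$, \[\mathfrak D(N,k)\cong\mathfrak u(d)^{k-r}\oplus\mathfrak u(d+1)^{r}\cong\mathfrak{su}(d)^{k-r}\oplus\mathfrak{su}(d+1)^{r}\oplus\mathfrak u(1)^k\] as Lie algebras. In particular $\dim\mathfrak D(N,k)=kd^2+2rd+r=d(N+r)+r$.
   Context: $\mathfrak u(n)$ denotes the Lie algebra of skew-Hermitian $n\times n$ complex matrices and $\mathfrak{su}(n)$ its traceless subalgebra, with the matrix commutator as bracket; $\lfloor\cdot\rfloor$ is the integer part. *)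

theory Defs
  imports Complex_Main "Jordan_Normal_Form.Matrix"
begin

definition u_alg :: "nat \<Rightarrow> complex mat set" where
  "u_alg n = {A \<in> carrier_mat n n. \<forall>i<n. \<forall>j<n. A $$ (i, j) = - cnj (A $$ (j, i))}"

definition su_alg :: "nat \<Rightarrow> complex mat set" where
  "su_alg n = {A \<in> u_alg n. (\<Sum>i<n. A $$ (i, i)) = 0}"

text \<open>D(N,k): skew-Hermitian matrices with A_ij = 0 unless k divides i - j
  (indices are 0-based here; divisibility of i - j is unaffected).\<close>
definition D_alg :: "nat \<Rightarrow> nat \<Rightarrow> complex mat set" where
  "D_alg N k = {A \<in> u_alg N. \<forall>i<N. \<forall>j<N.
      \<not> (int k dvd (int i - int j)) \<longrightarrow> A $$ (i, j) = 0}"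

definition mbr :: "complex mat \<Rightarrow> complex mat \<Rightarrow> complex mat" where
  "mbr A B = A * B - B * A"

definition rsc :: "real \<Rightarrow> complex mat \<Rightarrow> complex mat" where
  "rsc c A = complex_of_real c \<cdot>\<^sub>m A"

definition real_lie_subalg_u :: "complex mat set \<Rightarrow> nat \<Rightarrow> bool" where
  "real_lie_subalg_u S n \<longleftrightarrow> S \<subseteq> u_alg n \<and> 0\<^sub>m n n \<in> S \<and>
     (\<forall>A\<in>S. \<forall>B\<in>S. A + B \<in> S) \<and> (\<forall>c::real. \<forall>A\<in>S. rsc c A \<in> S) \<and>
     (\<forall>A\<in>S. \<forall>B\<in>S. mbr A B \<in> S)"

text \<open>Direct sum of matrix Lie algebras L_1 \<oplus> ... \<oplus> L_m, represented as lists of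
  blocks with componentwise operations.\<close>
definition dsum :: "complex mat set list \<Rightarrow> complex mat list set" where
  "dsum Ls = {xs. length xs = length Ls \<and> (\<forall>i<length Ls. xs ! i \<in> Ls ! i)}"

definition ladd :: "complex mat list \<Rightarrow> complex mat list \<Rightarrow> complex mat list" where
  "ladd xs ys = map2 (+) xs ys"

definition lsc :: "real \<Rightarrow> complex mat list \<Rightarrow> complex mat list" where
  "lsc c xs = map (rsc c) xs"

definition lbr :: "complex mat list \<Rightarrow> complex mat list \<Rightarrow> complex mat list" where
  "lbr xs ys = map2 mbr xs ys"

definition lie_iso :: "(complex mat \<Rightarrow> complex mat list) \<Rightarrow> complex mat set \<Rightarrow> complex mat list set \<Rightarrow> bool" where
  "lie_iso f S P \<longleftrightarrow> bij_betw f S P \<and>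
     (\<forall>A\<in>S. \<forall>B\<in>S. f (A + B) = ladd (f A) (f B)) \<and>
     (\<forall>c::real. \<forall>A\<in>S. f (rsc c A) = lsc c (f A)) \<and>
     (\<forall>A\<in>S. \<forall>B\<in>S. f (mbr A B) = lbr (f A) (f B))"

definition lie_isomorphic :: "complex mat set \<Rightarrow> complex mat list set \<Rightarrow> bool" where
  "lie_isomorphic S P \<longleftrightarrow> (\<exists>f. lie_iso f S P)"

definition rlincomb :: "nat \<Rightarrow> (nat \<Rightarrow> real) \<Rightarrow> complex mat list \<Rightarrow> complex mat" where
  "rlincomb n c bs = mat n n (\<lambda>(a, b). \<Sum>i<length bs. complex_of_real (c i) * (bs ! i) $$ (a, b))"

definition real_dim_eq :: "nat \<Rightarrow> complex mat set \<Rightarrow> nat \<Rightarrow> bool" where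
  "real_dim_eq n S m \<longleftrightarrow> (\<exists>bs. length bs = m \<and> set bs \<subseteq> S \<and>
     (\<forall>c. rlincomb n c bs = 0\<^sub>m n n \<longrightarrow> (\<forall>i<m. c i = 0)) \<and>
     (\<forall>A\<in>S. \<exists>c. A = rlincomb n c bs))"

end

theory Submission
  imports Defs
begin

text \<open>
  Matrices supported on the pattern \<open>i \<equiv> j (mod k)\<close> are closed under products, so
  \<open>D(N,k)\<close> is a Lie subalgebra of \<open>u(N)\<close>. Writing the indices of the residue class \<open>c\<close> as
  \<open>c + k m\<close>, a matrix of \<open>D(N,k)\<close> is the same as its \<open>k\<close> diagonal blocks
  \<open>A\<^sub>c = (A (c + k a) (c + k b))\<^sub>a\<^sub>,\<^sub>b\<close>, and taking blocks is a Lie isomorphism onto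
  \<open>\<Oplus>\<^sub>c u(n\<^sub>c)\<close>, where the class size \<open>n\<^sub>c\<close> is \<open>d + 1\<close> for the \<open>r\<close> classes \<open>c < r\<close> and \<open>d\<close> otherwise. For \<open>n > 0\<close>,
  \<open>X \<mapsto> (X - (tr X / n) I, tr X)\<close> is a Lie isomorphism \<open>u(n) \<cong> su(n) \<oplus> u(1)\<close>, because
  commutators are traceless and scalar matrices are central. Finally the matrices
  \<open>E\<^sub>i\<^sub>j - E\<^sub>j\<^sub>i\<close>, \<open>\<i>(E\<^sub>i\<^sub>j + E\<^sub>j\<^sub>i)\<close>, \<open>\<i>E\<^sub>i\<^sub>i\<close> with \<open>i \<equiv> j\<close> form a real basis of \<open>D(N,k)\<close>; there are
  \<open>\<Sum>\<^sub>c n\<^sub>c\<^sup>2 = k d\<^sup>2 + 2 r d + r\<close> of them.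
\<close>

lemma u_algI:
  assumes "A \<in> carrier_mat n n" and "\<And>i j. i < n \<Longrightarrow> j < n \<Longrightarrow> A $$ (i, j) = - cnj (A $$ (j, i))"
  shows "A \<in> u_alg n"
  using assms unfolding u_alg_def by blast

lemma u_alg_carrier: "A \<in> u_alg n \<Longrightarrow> A \<in> carrier_mat n n"
  unfolding u_alg_def by blast

lemma u_alg_skew: "A \<in> u_alg n \<Longrightarrow> i < n \<Longrightarrow> j < n \<Longrightarrow> A $$ (i, j) = - cnj (A $$ (j, i))"
  unfolding u_alg_def by blast

lemma index_mult_mat_sum:
  assumes "A \<in> carrier_mat n m" "B \<in> carrier_mat m p" "i < n" "j < p"
  shows "(A * B) $$ (i, j) = (\<Sum>l<m. A $$ (i, l) * B $$ (l, j))"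
  using assms by (simp add: scalar_prod_def lessThan_atLeast0)

lemma mbr_carrier: "A \<in> carrier_mat n n \<Longrightarrow> B \<in> carrier_mat n n \<Longrightarrow> mbr A B \<in> carrier_mat n n"
  unfolding mbr_def by (intro minus_carrier_mat mult_carrier_mat)

lemma index_mbr:
  assumes "A \<in> carrier_mat n n" "B \<in> carrier_mat n n" "i < n" "j < n"
  shows "mbr A B $$ (i, j) = (A * B) $$ (i, j) - (B * A) $$ (i, j)"
  using assms unfolding mbr_def by simp

lemma u_alg_add:
  assumes A: "A \<in> u_alg n" and B: "B \<in> u_alg n"
  shows "A + B \<in> u_alg n"
proof (rule u_algI)
  show "A + B \<in> carrier_mat n n" using u_alg_carrier[OF B] by simp
  fix i j assume "i < n" "j < n"
  then show "(A + B) $$ (i, j) = - cnj ((A + B) $$ (j, i))"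
    using u_alg_skew[OF A \<open>i < n\<close> \<open>j < n\<close>] u_alg_skew[OF B \<open>i < n\<close> \<open>j < n\<close>]
      u_alg_carrier[OF B] by simp
qed

lemma u_alg_rsc:
  assumes A: "A \<in> u_alg n"
  shows "rsc c A \<in> u_alg n"
  unfolding rsc_def
proof (rule u_algI)
  show "complex_of_real c \<cdot>\<^sub>m A \<in> carrier_mat n n" using u_alg_carrier[OF A] by simp
  fix i j assume "i < n" "j < n"
  then show "(complex_of_real c \<cdot>\<^sub>m A) $$ (i, j) = - cnj ((complex_of_real c \<cdot>\<^sub>m A) $$ (j, i))"
    using u_alg_skew[OF A \<open>i < n\<close> \<open>j < n\<close>] u_alg_carrier[OF A] by simp
qed

lemma u_alg_index_mult:
  assumes A: "A \<in> u_alg n" and B: "B \<in> u_alg n" and "i < n" "j < n"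
  shows "(A * B) $$ (i, j) = cnj ((B * A) $$ (j, i))"
proof -
  have "(A * B) $$ (i, j) = (\<Sum>l<n. A $$ (i, l) * B $$ (l, j))"
    using assms by (simp add: index_mult_mat_sum[OF u_alg_carrier[OF A] u_alg_carrier[OF B]])
  also have "\<dots> = (\<Sum>l<n. cnj (B $$ (j, l) * A $$ (l, i)))"
    using assms u_alg_skew[OF A \<open>i < n\<close>] u_alg_skew[OF B _ \<open>j < n\<close>] by (intro sum.cong) auto
  also have "\<dots> = cnj ((B * A) $$ (j, i))"
    using assms by (simp add: index_mult_mat_sum[OF u_alg_carrier[OF B] u_alg_carrier[OF A]] cnj_sum)
  finally show ?thesis .
qed

lemma u_alg_mbr:
  assumes A: "A \<in> u_alg n" and B: "B \<in> u_alg n"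
  shows "mbr A B \<in> u_alg n"
proof (rule u_algI)
  have cA: "A \<in> carrier_mat n n" and cB: "B \<in> carrier_mat n n"
    using A B by (auto dest: u_alg_carrier)
  show "mbr A B \<in> carrier_mat n n" using cA cB by (rule mbr_carrier)
  fix i j assume ij: "i < n" "j < n"
  show "mbr A B $$ (i, j) = - cnj (mbr A B $$ (j, i))"
    unfolding index_mbr[OF cA cB ij] index_mbr[OF cA cB ij(2,1)]
      u_alg_index_mult[OF A B ij] u_alg_index_mult[OF B A ij] by simp
qed

definition mod_supported :: "nat \<Rightarrow> complex mat \<Rightarrow> bool" where
  "mod_supported k A \<longleftrightarrow>
     (\<forall>i<dim_row A. \<forall>j<dim_col A. i mod k \<noteq> j mod k \<longrightarrow> A $$ (i, j) = 0)"

lemma mod_supportedD: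
  "mod_supported k A \<Longrightarrow> i < dim_row A \<Longrightarrow> j < dim_col A \<Longrightarrow> i mod k \<noteq> j mod k \<Longrightarrow> A $$ (i, j) = 0"
  unfolding mod_supported_def by blast

lemma mod_supported_add:
  "A \<in> carrier_mat n m \<Longrightarrow> B \<in> carrier_mat n m \<Longrightarrow> mod_supported k A \<Longrightarrow> mod_supported k B
   \<Longrightarrow> mod_supported k (A + B)"
  unfolding mod_supported_def by simp

lemma mod_supported_minus:
  "A \<in> carrier_mat n m \<Longrightarrow> B \<in> carrier_mat n m \<Longrightarrow> mod_supported k A \<Longrightarrow> mod_supported k B
   \<Longrightarrow> mod_supported k (A - B)"
  unfolding mod_supported_def by simp

lemma mod_supported_smult: "mod_supported k A \<Longrightarrow> mod_supported k (a \<cdot>\<^sub>m A)"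
  unfolding mod_supported_def by simp

lemma mod_supported_mult:
  assumes A: "A \<in> carrier_mat n m" and B: "B \<in> carrier_mat m p"
    and "mod_supported k A" "mod_supported k B"
  shows "mod_supported k (A * B)"
  unfolding mod_supported_def
proof (intro allI impI)
  fix i j assume ij: "i < dim_row (A * B)" "j < dim_col (A * B)" "i mod k \<noteq> j mod k"
  have "A $$ (i, l) * B $$ (l, j) = 0" if "l < m" for l
    using that ij A B mod_supportedD[OF assms(3), of i l] mod_supportedD[OF assms(4), of l j]
    by (cases "i mod k = l mod k") auto
  then have "(\<Sum>l<m. A $$ (i, l) * B $$ (l, j)) = 0" by (intro sum.neutral) auto
  moreover have "(A * B) $$ (i, j) = (\<Sum>l<m. A $$ (i, l) * B $$ (l, j))"
    using ij A B by (intro index_mult_mat_sum) auto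
  ultimately show "(A * B) $$ (i, j) = 0" by simp
qed

lemma D_alg_iff: "A \<in> D_alg N k \<longleftrightarrow> A \<in> u_alg N \<and> mod_supported k A"
proof -
  have "int k dvd (int i - int j) \<longleftrightarrow> i mod k = j mod k" for i j
    by (metis mod_eq_dvd_iff of_nat_eq_iff zmod_int)
  then show ?thesis
    unfolding D_alg_def mod_supported_def by (auto dest: u_alg_carrier)
qed

lemma D_alg_carrier: "A \<in> D_alg N k \<Longrightarrow> A \<in> carrier_mat N N"
  by (simp add: D_alg_iff u_alg_carrier)

lemma D_alg_zero:
  "A \<in> D_alg N k \<Longrightarrow> i < N \<Longrightarrow> j < N \<Longrightarrow> i mod k \<noteq> j mod k \<Longrightarrow> A $$ (i, j) = 0"
  using D_alg_carrier[of A N k] by (auto simp: D_alg_iff intro: mod_supportedD)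

lemma D_alg_real_lie_subalg: "real_lie_subalg_u (D_alg N k) N"
  unfolding real_lie_subalg_u_def
proof (intro conjI ballI allI)
  show "D_alg N k \<subseteq> u_alg N" by (auto simp: D_alg_iff)
  show "0\<^sub>m N N \<in> D_alg N k"
    unfolding D_alg_iff mod_supported_def by (auto intro: u_algI)
  fix A B assume "A \<in> D_alg N k" "B \<in> D_alg N k"
  then have A: "A \<in> u_alg N" "mod_supported k A" and B: "B \<in> u_alg N" "mod_supported k B"
    and cA: "A \<in> carrier_mat N N" and cB: "B \<in> carrier_mat N N"
    unfolding D_alg_iff by (auto dest: u_alg_carrier)
  show "A + B \<in> D_alg N k"
    unfolding D_alg_iff using A B cA cB by (simp add: u_alg_add mod_supported_add)
  have "mod_supported k (mbr A B)"
    unfolding mbr_def using A B cA cB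
    by (intro mod_supported_minus[of _ N N] mod_supported_mult[of _ N N _ N]) (auto simp: A B)
  then show "mbr A B \<in> D_alg N k"
    unfolding D_alg_iff using A B by (simp add: u_alg_mbr)
next
  fix c A assume "A \<in> D_alg N k"
  then show "rsc c A \<in> D_alg N k"
    unfolding D_alg_iff rsc_def by (simp add: u_alg_rsc[unfolded rsc_def] mod_supported_smult)
qed

section \<open>Residue classes\<close>

definition class_size :: "nat \<Rightarrow> nat \<Rightarrow> nat \<Rightarrow> nat" where
  "class_size N k c = (if c < N mod k then N div k + 1 else N div k)"

lemma add_mult_less_iff_class_size:
  assumes "c < k"
  shows "c + k * m < N \<longleftrightarrow> m < class_size N k c"
proof -
  define q where "q = N div k"
  define r where "r = N mod k"
  have N: "N = k * q + r" and "r < k"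
    using assms unfolding q_def r_def by simp_all
  have "c + k * m < k * q + r \<longleftrightarrow> m < q \<or> (m = q \<and> c < r)"
  proof (cases m q rule: linorder_cases)
    case less
    then have "k * (m + 1) \<le> k * q" by (intro mult_le_mono2) simp
    then show ?thesis using less assms by simp
  next
    case greater
    then have "k * (q + 1) \<le> k * m" by (intro mult_le_mono2) simp
    then show ?thesis using greater \<open>r < k\<close> by simp
  qed simp
  moreover have "class_size N k c = (if c < r then q + 1 else q)"
    unfolding class_size_def q_def r_def ..
  ultimately show ?thesis using N by auto
qed

lemma div_less_class_size: "0 < k \<Longrightarrow> i < N \<Longrightarrow> i div k < class_size N k (i mod k)"
  using add_mult_less_iff_class_size[of "i mod k" k "i div k" N] by simp

lemma residue_class_eq_image:
  assumes "c < k"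
  shows "{l. l < N \<and> l mod k = c} = (\<lambda>m. c + k * m) ` {..<class_size N k c}"
proof (intro equalityI subsetI)
  fix l assume "l \<in> {l. l < N \<and> l mod k = c}"
  then have "l = c + k * (l div k)" and "l div k < class_size N k c"
    using assms div_less_class_size[of k l N] by auto
  then show "l \<in> (\<lambda>m. c + k * m) ` {..<class_size N k c}" by blast
qed (use assms add_mult_less_iff_class_size[OF assms] in auto)

lemma sum_residue_class:
  fixes f :: "nat \<Rightarrow> 'a::comm_monoid_add"
  assumes "c < k" and "\<And>l. l < N \<Longrightarrow> l mod k \<noteq> c \<Longrightarrow> f l = 0"
  shows "(\<Sum>l<N. f l) = (\<Sum>m<class_size N k c. f (c + k * m))"
proof -
  have inj: "inj_on (\<lambda>m. c + k * m) {..<class_size N k c}"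
    using assms(1) by (auto simp: inj_on_def)
  have "(\<Sum>l<N. f l) = (\<Sum>l\<in>{l. l < N \<and> l mod k = c}. f l)"
    using assms(2) by (intro sum.mono_neutral_right) auto
  also have "\<dots> = (\<Sum>m<class_size N k c. f (c + k * m))"
    unfolding residue_class_eq_image[OF assms(1)] sum.reindex[OF inj] by simp
  finally show ?thesis .
qed

lemma card_residue_class:
  assumes "c < k"
  shows "card {l. l < N \<and> l mod k = c} = class_size N k c"
proof -
  have "inj_on (\<lambda>m. c + k * m) {..<class_size N k c}"
    using assms by (auto simp: inj_on_def)
  then show ?thesis
    unfolding residue_class_eq_image[OF assms] by (simp add: card_image)
qed

lemma dsum_map_iff:
  "xs \<in> dsum (map L ns) \<longleftrightarrow> length xs = length ns \<and> (\<forall>i<length ns. xs ! i \<in> L (ns ! i))"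
  unfolding dsum_def by auto

lemma dsum_append_iff:
  assumes "length xs = length Ls"
  shows "xs @ ys \<in> dsum (Ls @ Ms) \<longleftrightarrow> xs \<in> dsum Ls \<and> ys \<in> dsum Ms"
proof
  assume xys: "xs @ ys \<in> dsum (Ls @ Ms)"
  have "ys ! i \<in> Ms ! i" if "i < length Ms" for i
    using xys that assms unfolding dsum_def
    by (auto dest!: spec[of _ "length Ls + i"] simp: nth_append)
  moreover have "xs ! i \<in> Ls ! i" if "i < length Ls" for i
    using xys that assms unfolding dsum_def by (auto dest!: spec[of _ i] simp: nth_append)
  ultimately show "xs \<in> dsum Ls \<and> ys \<in> dsum Ms"
    using xys assms unfolding dsum_def by auto
next
  assume "xs \<in> dsum Ls \<and> ys \<in> dsum Ms"
  then show "xs @ ys \<in> dsum (Ls @ Ms)"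
    using assms unfolding dsum_def by (auto simp: nth_append)
qed

lemma dsum_appendE:
  assumes "zs \<in> dsum (Ls @ Ms)"
  obtains xs ys where "zs = xs @ ys" "length xs = length Ls" "xs \<in> dsum Ls" "ys \<in> dsum Ms"
proof -
  have l: "length (take (length Ls) zs) = length Ls"
    using assms unfolding dsum_def by simp
  then have "take (length Ls) zs \<in> dsum Ls" "drop (length Ls) zs \<in> dsum Ms"
    using assms dsum_append_iff[OF l, of "drop (length Ls) zs" Ms] by simp_all
  with l show ?thesis
    using that[of "take (length Ls) zs" "drop (length Ls) zs"] by simp
qed

lemma dsum_replicate_iff: "ys \<in> dsum (replicate m L) \<longleftrightarrow> length ys = m \<and> set ys \<subseteq> L"
  unfolding dsum_def by (auto simp: set_conv_nth)

lemma map_map2_hom: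
  assumes "length xs = length ys"
    and "\<And>i. i < length xs \<Longrightarrow> f (g (xs ! i) (ys ! i)) = h (f (xs ! i)) (f (ys ! i))"
  shows "map f (map2 g xs ys) = map2 h (map f xs) (map f ys)"
  using assms by (intro nth_equalityI) auto

definition list_lie_iso ::
  "(complex mat list \<Rightarrow> complex mat list) \<Rightarrow> complex mat list set \<Rightarrow> complex mat list set \<Rightarrow> bool" where
  "list_lie_iso g P Q \<longleftrightarrow> bij_betw g P Q \<and>
     (\<forall>xs\<in>P. \<forall>ys\<in>P. g (ladd xs ys) = ladd (g xs) (g ys)) \<and>
     (\<forall>c::real. \<forall>xs\<in>P. g (lsc c xs) = lsc c (g xs)) \<and>
     (\<forall>xs\<in>P. \<forall>ys\<in>P. g (lbr xs ys) = lbr (g xs) (g ys))"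

lemma lie_iso_comp:
  assumes f: "lie_iso f S P" and g: "list_lie_iso g P Q"
  shows "lie_iso (g \<circ> f) S Q"
proof -
  have fP: "f A \<in> P" if "A \<in> S" for A
    using f that unfolding lie_iso_def bij_betw_def by blast
  show ?thesis
    using f g fP unfolding lie_iso_def list_lie_iso_def by (auto intro: bij_betw_trans)
qed

section \<open>Block decomposition\<close>

definition class_block :: "nat \<Rightarrow> nat \<Rightarrow> nat \<Rightarrow> complex mat \<Rightarrow> complex mat" where
  "class_block N k c A =
     mat (class_size N k c) (class_size N k c) (\<lambda>(a, b). A $$ (c + k * a, c + k * b))"

lemma class_block_carrier [simp]:
  "class_block N k c A \<in> carrier_mat (class_size N k c) (class_size N k c)"
  "dim_row (class_block N k c A) = class_size N k c"
  "dim_col (class_block N k c A) = class_size N k c"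
  unfolding class_block_def by simp_all

lemma index_class_block [simp]:
  "a < class_size N k c \<Longrightarrow> b < class_size N k c \<Longrightarrow>
   class_block N k c A $$ (a, b) = A $$ (c + k * a, c + k * b)"
  unfolding class_block_def by simp

lemma class_block_add:
  assumes "c < k" "A \<in> carrier_mat N N" "B \<in> carrier_mat N N"
  shows "class_block N k c (A + B) = class_block N k c A + class_block N k c B"
  using assms add_mult_less_iff_class_size[OF assms(1)] by (intro eq_matI) auto

lemma class_block_minus:
  assumes "c < k" "A \<in> carrier_mat N N" "B \<in> carrier_mat N N"
  shows "class_block N k c (A - B) = class_block N k c A - class_block N k c B"
  using assms add_mult_less_iff_class_size[OF assms(1)] by (intro eq_matI) auto

lemma class_block_smult:
  assumes "c < k" "A \<in> carrier_mat N N"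
  shows "class_block N k c (a \<cdot>\<^sub>m A) = a \<cdot>\<^sub>m class_block N k c A"
  using assms add_mult_less_iff_class_size[OF assms(1)] by (intro eq_matI) auto

lemma class_block_mult:
  assumes c: "c < k" and A: "A \<in> carrier_mat N N" and B: "B \<in> carrier_mat N N"
    and supp: "mod_supported k A"
  shows "class_block N k c (A * B) = class_block N k c A * class_block N k c B"
proof (rule eq_matI)
  fix a b assume "a < dim_row (class_block N k c A * class_block N k c B)"
    "b < dim_col (class_block N k c A * class_block N k c B)"
  then have ab: "a < class_size N k c" "b < class_size N k c" by simp_all
  then have "c + k * a < N" "c + k * b < N"
    using add_mult_less_iff_class_size[OF c] by auto
  then have "(A * B) $$ (c + k * a, c + k * b)
      = (\<Sum>l<N. A $$ (c + k * a, l) * B $$ (l, c + k * b))"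
    using A B by (intro index_mult_mat_sum) auto
  also have "\<dots> = (\<Sum>m<class_size N k c. A $$ (c + k * a, c + k * m) * B $$ (c + k * m, c + k * b))"
    using c A \<open>c + k * a < N\<close> mod_supportedD[OF supp]
    by (intro sum_residue_class) auto
  also have "\<dots> = (class_block N k c A * class_block N k c B) $$ (a, b)"
    using ab by (subst index_mult_mat_sum[of _ "class_size N k c" "class_size N k c"]) auto
  finally show "class_block N k c (A * B) $$ (a, b) = (class_block N k c A * class_block N k c B) $$ (a, b)"
    using ab by simp
qed simp_all

lemma class_block_u_alg:
  assumes "c < k" "A \<in> u_alg N"
  shows "class_block N k c A \<in> u_alg (class_size N k c)"
proof (rule u_algI)
  fix a b assume "a < class_size N k c" "b < class_size N k c"
  moreover from this have "c + k * a < N" "c + k * b < N"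
    using add_mult_less_iff_class_size[OF assms(1)] by auto
  ultimately show "class_block N k c A $$ (a, b) = - cnj (class_block N k c A $$ (b, a))"
    using u_alg_skew[OF assms(2) \<open>c + k * a < N\<close> \<open>c + k * b < N\<close>] by simp
qed simp

text \<open>The blocks are listed starting with the class \<open>N mod k\<close>, so that the \<open>k - N mod k\<close>
  blocks of size \<open>N div k\<close> come before the \<open>N mod k\<close> blocks of size \<open>N div k + 1\<close>.\<close>

definition block_class :: "nat \<Rightarrow> nat \<Rightarrow> nat \<Rightarrow> nat" where
  "block_class N k t = (t + N mod k) mod k"

definition block_pos :: "nat \<Rightarrow> nat \<Rightarrow> nat \<Rightarrow> nat" where
  "block_pos N k c = (c + (k - N mod k)) mod k"

definition block_sizes :: "nat \<Rightarrow> nat \<Rightarrow> nat list" where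
  "block_sizes N k = replicate (k - N mod k) (N div k) @ replicate (N mod k) (N div k + 1)"

lemma block_class_less: "0 < k \<Longrightarrow> block_class N k t < k"
  unfolding block_class_def by simp

lemma block_pos_less: "0 < k \<Longrightarrow> block_pos N k c < k"
  unfolding block_pos_def by simp

lemma block_pos_block_class: "t < k \<Longrightarrow> block_pos N k (block_class N k t) = t"
proof -
  assume "t < k"
  then have "t + N mod k + (k - N mod k) = t + k"
    using mod_less_divisor[of k N] by linarith
  then show ?thesis
    using \<open>t < k\<close> unfolding block_pos_def block_class_def by (metis mod_add_left_eq mod_add_self2 mod_less)
qed

lemma block_class_block_pos: "c < k \<Longrightarrow> block_class N k (block_pos N k c) = c"
proof -
  assume "c < k"
  then have "c + (k - N mod k) + N mod k = c + k"
    using mod_less_divisor[of k N] by linarith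
  then show ?thesis
    using \<open>c < k\<close> unfolding block_pos_def block_class_def by (metis mod_add_left_eq mod_add_self2 mod_less)
qed

lemma length_block_sizes: "0 < k \<Longrightarrow> length (block_sizes N k) = k"
  unfolding block_sizes_def by simp

lemma nth_block_sizes:
  assumes "t < k"
  shows "block_sizes N k ! t = class_size N k (block_class N k t)"
proof (cases "t < k - N mod k")
  case True
  then show ?thesis
    unfolding block_sizes_def block_class_def class_size_def by (simp add: nth_append)
next
  case False
  have "k \<le> t + N mod k" "t + N mod k - k < k"
    using False assms mod_less_divisor[of k N] by linarith+
  then have "(t + N mod k) mod k = t + N mod k - k"
    by (metis le_mod_geq mod_less)
  with False show ?thesis
    using assms unfolding block_sizes_def block_class_def class_size_def by (simp add: nth_append)
qed

definition blocks :: "nat \<Rightarrow> nat \<Rightarrow> complex mat \<Rightarrow> complex mat list" where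
  "blocks N k A = map (\<lambda>t. class_block N k (block_class N k t) A) [0..<k]"

definition unblocks :: "nat \<Rightarrow> nat \<Rightarrow> complex mat list \<Rightarrow> complex mat" where
  "unblocks N k xs = mat N N (\<lambda>(i, j).
     if i mod k = j mod k then xs ! block_pos N k (i mod k) $$ (i div k, j div k) else 0)"

lemma length_blocks [simp]: "length (blocks N k A) = k"
  unfolding blocks_def by simp

lemma nth_blocks: "t < k \<Longrightarrow> blocks N k A ! t = class_block N k (block_class N k t) A"
  unfolding blocks_def by simp

lemma unblocks_carrier: "unblocks N k xs \<in> carrier_mat N N"
  unfolding unblocks_def by simp

lemma index_unblocks:
  "i < N \<Longrightarrow> j < N \<Longrightarrow> unblocks N k xs $$ (i, j) =
     (if i mod k = j mod k then xs ! block_pos N k (i mod k) $$ (i div k, j div k) else 0)"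
  unfolding unblocks_def by simp

lemma blocks_in_dsum:
  assumes "0 < k" "A \<in> D_alg N k"
  shows "blocks N k A \<in> dsum (map u_alg (block_sizes N k))"
  using assms class_block_u_alg[OF block_class_less[OF assms(1)]]
  by (simp add: dsum_map_iff length_block_sizes nth_block_sizes nth_blocks D_alg_iff)

lemma nth_block_pos_in_u_alg:
  assumes k: "0 < k" and xs: "xs \<in> dsum (map u_alg (block_sizes N k))" and c: "c < k"
  shows "xs ! block_pos N k c \<in> u_alg (class_size N k c)"
proof -
  have "xs ! block_pos N k c \<in> u_alg (block_sizes N k ! block_pos N k c)"
    using xs block_pos_less[OF k] by (simp add: dsum_map_iff length_block_sizes[OF k])
  then show ?thesis
    by (simp add: nth_block_sizes[OF block_pos_less[OF k]] block_class_block_pos[OF c])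
qed

lemma unblocks_in_D_alg:
  assumes k: "0 < k" and xs: "xs \<in> dsum (map u_alg (block_sizes N k))"
  shows "unblocks N k xs \<in> D_alg N k"
  unfolding D_alg_iff
proof
  show "unblocks N k xs \<in> u_alg N"
  proof (rule u_algI)
    fix i j assume ij: "i < N" "j < N"
    show "unblocks N k xs $$ (i, j) = - cnj (unblocks N k xs $$ (j, i))"
    proof (cases "i mod k = j mod k")
      case True
      define c where "c = i mod k"
      have "c < k" using k unfolding c_def by simp
      then have X: "xs ! block_pos N k c \<in> u_alg (class_size N k c)"
        by (rule nth_block_pos_in_u_alg[OF k xs])
      have "i div k < class_size N k c" "j div k < class_size N k c"
        using div_less_class_size[OF k] ij True unfolding c_def by metis+
      from u_alg_skew[OF X this] show ?thesis
        using True by (simp add: index_unblocks ij c_def)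
    qed (simp add: index_unblocks ij)
  qed (rule unblocks_carrier)
  show "mod_supported k (unblocks N k xs)"
    unfolding mod_supported_def unblocks_def by simp
qed

lemma unblocks_blocks:
  assumes k: "0 < k" and A: "A \<in> D_alg N k"
  shows "unblocks N k (blocks N k A) = A"
proof (rule eq_matI)
  fix i j assume "i < dim_row A" "j < dim_col A"
  then have ij: "i < N" "j < N" using D_alg_carrier[OF A] by auto
  show "unblocks N k (blocks N k A) $$ (i, j) = A $$ (i, j)"
  proof (cases "i mod k = j mod k")
    case True
    have "i div k < class_size N k (i mod k)" "j div k < class_size N k (i mod k)"
      using div_less_class_size[OF k] ij True by metis+
    then show ?thesis
      using True ij k block_pos_less[OF k] mod_mult_div_eq[of i k] mod_mult_div_eq[of j k]
      by (simp add: index_unblocks nth_blocks block_class_block_pos)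
  next
    case False
    then show ?thesis
      using D_alg_zero[OF A ij False] ij by (simp add: index_unblocks)
  qed
qed (use D_alg_carrier[OF A] in \<open>simp_all add: unblocks_def\<close>)

lemma blocks_unblocks:
  assumes k: "0 < k" and xs: "xs \<in> dsum (map u_alg (block_sizes N k))"
  shows "blocks N k (unblocks N k xs) = xs"
proof (rule nth_equalityI)
  show "length (blocks N k (unblocks N k xs)) = length xs"
    using xs by (simp add: dsum_map_iff length_block_sizes[OF k])
  fix t assume "t < length (blocks N k (unblocks N k xs))"
  then have t: "t < k" by simp
  define c where "c = block_class N k t"
  have c: "c < k" unfolding c_def using block_class_less[OF k] .
  have t_pos: "block_pos N k c = t" unfolding c_def using block_pos_block_class[OF t] .
  have xt: "xs ! t \<in> carrier_mat (class_size N k c) (class_size N k c)"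
    using u_alg_carrier[OF nth_block_pos_in_u_alg[OF k xs c]] unfolding t_pos .
  show "blocks N k (unblocks N k xs) ! t = xs ! t"
  proof (rule eq_matI)
    fix a b assume "a < dim_row (xs ! t)" "b < dim_col (xs ! t)"
    then have ab: "a < class_size N k c" "b < class_size N k c" using xt by auto
    then have "c + k * a < N" "c + k * b < N"
      using add_mult_less_iff_class_size[OF c] by auto
    then show "blocks N k (unblocks N k xs) ! t $$ (a, b) = xs ! t $$ (a, b)"
      using ab c t by (simp add: nth_blocks index_unblocks t_pos c_def[symmetric])
  qed (use xt t in \<open>simp_all add: nth_blocks c_def\<close>)
qed

lemma lie_iso_blocks:
  assumes k: "0 < k"
  shows "lie_iso (blocks N k) (D_alg N k) (dsum (map u_alg (block_sizes N k)))"
  unfolding lie_iso_def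
proof (intro conjI ballI allI)
  show "bij_betw (blocks N k) (D_alg N k) (dsum (map u_alg (block_sizes N k)))"
    using k by (intro bij_betw_byWitness[where f' = "unblocks N k"])
      (auto simp: unblocks_blocks blocks_unblocks blocks_in_dsum unblocks_in_D_alg)
  fix A B assume "A \<in> D_alg N k" "B \<in> D_alg N k"
  then have A: "A \<in> carrier_mat N N" "mod_supported k A" and B: "B \<in> carrier_mat N N" "mod_supported k B"
    by (auto simp: D_alg_iff D_alg_carrier)
  show "blocks N k (A + B) = ladd (blocks N k A) (blocks N k B)"
    using A B block_class_less[OF k]
    by (intro nth_equalityI) (simp_all add: ladd_def nth_blocks class_block_add)
  show "blocks N k (mbr A B) = lbr (blocks N k A) (blocks N k B)"
    using A B block_class_less[OF k]
    by (intro nth_equalityI)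
      (simp_all add: lbr_def mbr_def nth_blocks class_block_minus class_block_mult)
next
  fix s A assume "A \<in> D_alg N k"
  then have "A \<in> carrier_mat N N" by (rule D_alg_carrier)
  then show "blocks N k (rsc s A) = lsc s (blocks N k A)"
    using block_class_less[OF k]
    by (intro nth_equalityI) (simp_all add: lsc_def rsc_def nth_blocks class_block_smult)
qed

section \<open>Splitting off the trace\<close>

definition mat_trace :: "complex mat \<Rightarrow> complex" where
  "mat_trace X = (\<Sum>i<dim_row X. X $$ (i, i))"

lemma su_alg_iff: "A \<in> su_alg n \<longleftrightarrow> A \<in> u_alg n \<and> mat_trace A = 0"
  unfolding su_alg_def mat_trace_def by (auto dest: u_alg_carrier)

lemma mat_trace_add:
  "X \<in> carrier_mat n n \<Longrightarrow> Y \<in> carrier_mat n n \<Longrightarrow> mat_trace (X + Y) = mat_trace X + mat_trace Y"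
  unfolding mat_trace_def by (simp add: sum.distrib)

lemma mat_trace_smult: "X \<in> carrier_mat n n \<Longrightarrow> mat_trace (a \<cdot>\<^sub>m X) = a * mat_trace X"
  unfolding mat_trace_def by (simp add: sum_distrib_left)

lemma mat_trace_add_scalar:
  "X \<in> carrier_mat n n \<Longrightarrow> mat_trace (X + a \<cdot>\<^sub>m 1\<^sub>m n) = mat_trace X + of_nat n * a"
  unfolding mat_trace_def by (simp add: sum.distrib)

lemma mat_trace_mbr:
  assumes X: "X \<in> carrier_mat n n" and Y: "Y \<in> carrier_mat n n"
  shows "mat_trace (mbr X Y) = 0"
proof -
  have "mat_trace (mbr X Y) = (\<Sum>i<n. \<Sum>l<n. X $$ (i, l) * Y $$ (l, i)) - (\<Sum>i<n. \<Sum>l<n. Y $$ (i, l) * X $$ (l, i))"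
    using X Y by (simp add: mat_trace_def sum_subtractf mbr_def scalar_prod_def lessThan_atLeast0)
  also have "(\<Sum>i<n. \<Sum>l<n. Y $$ (i, l) * X $$ (l, i)) = (\<Sum>i<n. \<Sum>l<n. X $$ (i, l) * Y $$ (l, i))"
    by (subst sum.swap) (simp add: mult.commute)
  finally show ?thesis by simp
qed

lemma cnj_mat_trace:
  assumes X: "X \<in> u_alg n"
  shows "cnj (mat_trace X) = - mat_trace X"
proof -
  have "cnj (X $$ (i, i)) = - X $$ (i, i)" if "i < n" for i
    using arg_cong[where f = cnj, OF u_alg_skew[OF X that that]] by simp
  then show ?thesis
    using u_alg_carrier[OF X] by (simp add: mat_trace_def cnj_sum sum_negf[symmetric])
qed

lemma mult_add_scalar_mat:
  fixes X Y :: "'a :: comm_semiring_1 mat"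
  assumes X: "X \<in> carrier_mat n n" and Y: "Y \<in> carrier_mat n n"
  shows "(X + a \<cdot>\<^sub>m 1\<^sub>m n) * (Y + b \<cdot>\<^sub>m 1\<^sub>m n)
    = X * Y + b \<cdot>\<^sub>m X + (a \<cdot>\<^sub>m Y + (a * b) \<cdot>\<^sub>m 1\<^sub>m n)"
proof -
  have "(X + a \<cdot>\<^sub>m 1\<^sub>m n) * (Y + b \<cdot>\<^sub>m 1\<^sub>m n)
      = X * (Y + b \<cdot>\<^sub>m 1\<^sub>m n) + (a \<cdot>\<^sub>m 1\<^sub>m n) * (Y + b \<cdot>\<^sub>m 1\<^sub>m n)"
    using X Y by (intro add_mult_distrib_mat[of _ n n]) auto
  also have "X * (Y + b \<cdot>\<^sub>m 1\<^sub>m n) = X * Y + b \<cdot>\<^sub>m X"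
    using X Y by (simp add: mult_add_distrib_mat[of _ n n] mult_smult_distrib[OF X one_carrier_mat]
        right_mult_one_mat[OF X])
  also have "(a \<cdot>\<^sub>m 1\<^sub>m n) * (Y + b \<cdot>\<^sub>m 1\<^sub>m n) = a \<cdot>\<^sub>m Y + (a * b) \<cdot>\<^sub>m 1\<^sub>m n"
    using Y by (intro eq_matI) (auto simp: mult_smult_assoc_mat[of _ n n] distrib_left)
  finally show ?thesis .
qed

lemma mbr_add_scalar:
  assumes X: "X \<in> carrier_mat n n" and Y: "Y \<in> carrier_mat n n"
  shows "mbr (X + a \<cdot>\<^sub>m 1\<^sub>m n) (Y + b \<cdot>\<^sub>m 1\<^sub>m n) = mbr X Y"
  unfolding mbr_def mult_add_scalar_mat[OF X Y] mult_add_scalar_mat[OF Y X]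
  using X Y by (intro eq_matI) (auto simp: mult.commute)

definition traceless_part :: "complex mat \<Rightarrow> complex mat" where
  "traceless_part X = X + (- mat_trace X / of_nat (dim_row X)) \<cdot>\<^sub>m 1\<^sub>m (dim_row X)"

definition trace_block :: "complex mat \<Rightarrow> complex mat" where
  "trace_block X = mat 1 1 (\<lambda>_. mat_trace X)"

definition add_scalar :: "complex mat \<Rightarrow> complex mat \<Rightarrow> complex mat" where
  "add_scalar S t = S + (t $$ (0, 0) / of_nat (dim_row S)) \<cdot>\<^sub>m 1\<^sub>m (dim_row S)"

lemma traceless_part_eq:
  "X \<in> carrier_mat n n \<Longrightarrow> traceless_part X = X + (- mat_trace X / of_nat n) \<cdot>\<^sub>m 1\<^sub>m n"
  unfolding traceless_part_def by simp

lemma add_scalar_eq: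
  "S \<in> carrier_mat n n \<Longrightarrow> add_scalar S t = S + (t $$ (0, 0) / of_nat n) \<cdot>\<^sub>m 1\<^sub>m n"
  unfolding add_scalar_def by simp

lemma u_alg_add_scalar:
  assumes X: "X \<in> u_alg n" and a: "cnj a = - a"
  shows "X + a \<cdot>\<^sub>m 1\<^sub>m n \<in> u_alg n"
proof (rule u_algI)
  fix i j assume "i < n" "j < n"
  with u_alg_skew[OF X this] show "(X + a \<cdot>\<^sub>m 1\<^sub>m n) $$ (i, j) = - cnj ((X + a \<cdot>\<^sub>m 1\<^sub>m n) $$ (j, i))"
    using u_alg_carrier[OF X] a by simp
qed (use u_alg_carrier[OF X] in simp)

lemma traceless_part_in_su_alg:
  assumes X: "X \<in> u_alg n" and n: "0 < n"
  shows "traceless_part X \<in> su_alg n"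
  unfolding su_alg_iff traceless_part_eq[OF u_alg_carrier[OF X]]
  using u_alg_carrier[OF X] n cnj_mat_trace[OF X]
  by (simp add: u_alg_add_scalar[OF X] mat_trace_add_scalar)

lemma trace_block_in_u_alg: "X \<in> u_alg n \<Longrightarrow> trace_block X \<in> u_alg 1"
  unfolding trace_block_def by (intro u_algI) (simp_all add: cnj_mat_trace)

lemma add_scalar_in_u_alg:
  assumes S: "S \<in> su_alg n" and t: "t \<in> u_alg 1"
  shows "add_scalar S t \<in> u_alg n"
proof -
  have Su: "S \<in> u_alg n" using S su_alg_iff by blast
  have "cnj (t $$ (0, 0)) = - t $$ (0, 0)"
    using arg_cong[where f = cnj, OF u_alg_skew[OF t, of 0 0]] by simp
  then have "cnj (t $$ (0, 0) / of_nat n) = - (t $$ (0, 0) / of_nat n)" by simp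
  then show ?thesis
    unfolding add_scalar_eq[OF u_alg_carrier[OF Su]] by (rule u_alg_add_scalar[OF Su])
qed

lemma add_scalar_traceless_part:
  assumes X: "X \<in> carrier_mat n n" and n: "0 < n"
  shows "add_scalar (traceless_part X) (trace_block X) = X"
  using X n unfolding traceless_part_eq[OF X] trace_block_def
  by (subst add_scalar_eq[of _ n]) (auto intro!: eq_matI)

lemma mat_trace_add_scalar_traceless:
  assumes S: "S \<in> su_alg n" and n: "0 < n"
  shows "mat_trace (add_scalar S t) = t $$ (0, 0)"
proof -
  have S': "S \<in> carrier_mat n n" and "mat_trace S = 0"
    using S by (auto simp: su_alg_iff u_alg_carrier)
  then show ?thesis
    using n by (simp add: add_scalar_eq[OF S'] mat_trace_add_scalar[OF S'])
qed

lemma traceless_part_add_scalar: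
  assumes S: "S \<in> su_alg n" and n: "0 < n"
  shows "traceless_part (add_scalar S t) = S"
proof -
  have S': "S \<in> carrier_mat n n" using S by (simp add: su_alg_iff u_alg_carrier)
  then have Z: "add_scalar S t \<in> carrier_mat n n" by (simp add: add_scalar_eq)
  have "traceless_part (add_scalar S t)
      = add_scalar S t + (- t $$ (0, 0) / of_nat n) \<cdot>\<^sub>m 1\<^sub>m n"
    unfolding traceless_part_eq[OF Z] mat_trace_add_scalar_traceless[OF S n] ..
  also have "\<dots> = S"
    using S' unfolding add_scalar_eq[OF S'] by (intro eq_matI) auto
  finally show ?thesis .
qed

lemma trace_block_add_scalar:
  assumes S: "S \<in> su_alg n" and n: "0 < n" and t: "t \<in> carrier_mat 1 1"
  shows "trace_block (add_scalar S t) = t"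
  using t unfolding trace_block_def mat_trace_add_scalar_traceless[OF S n]
  by (intro eq_matI) auto

lemma traceless_part_add:
  assumes X: "X \<in> carrier_mat n n" and Y: "Y \<in> carrier_mat n n"
  shows "traceless_part (X + Y) = traceless_part X + traceless_part Y"
  unfolding traceless_part_eq[OF add_carrier_mat[of Y n n X, OF Y]] traceless_part_eq[OF X]
    traceless_part_eq[OF Y] mat_trace_add[OF X Y]
  using X Y by (intro eq_matI) (auto simp: diff_divide_distrib)

lemma traceless_part_smult:
  assumes X: "X \<in> carrier_mat n n"
  shows "traceless_part (a \<cdot>\<^sub>m X) = a \<cdot>\<^sub>m traceless_part X"
  unfolding traceless_part_eq[OF smult_carrier_mat[OF X]] traceless_part_eq[OF X]
    mat_trace_smult[OF X]
  using X by (intro eq_matI) (auto simp: algebra_simps)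

lemma traceless_part_mbr:
  assumes X: "X \<in> carrier_mat n n" and Y: "Y \<in> carrier_mat n n"
  shows "traceless_part (mbr X Y) = mbr (traceless_part X) (traceless_part Y)"
proof -
  have "traceless_part (mbr X Y) = mbr X Y"
    using mbr_carrier[OF X Y] unfolding traceless_part_eq[OF mbr_carrier[OF X Y]] mat_trace_mbr[OF X Y]
    by (intro eq_matI) auto
  then show ?thesis
    unfolding traceless_part_eq[OF X] traceless_part_eq[OF Y] mbr_add_scalar[OF X Y] .
qed

lemma trace_block_add:
  "X \<in> carrier_mat n n \<Longrightarrow> Y \<in> carrier_mat n n \<Longrightarrow>
   trace_block (X + Y) = trace_block X + trace_block Y"
  unfolding trace_block_def by (intro eq_matI) (auto simp: mat_trace_add)

lemma trace_block_smult:
  "X \<in> carrier_mat n n \<Longrightarrow> trace_block (a \<cdot>\<^sub>m X) = a \<cdot>\<^sub>m trace_block X"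
  unfolding trace_block_def by (intro eq_matI) (auto simp: mat_trace_smult)

lemma trace_block_mbr:
  "X \<in> carrier_mat n n \<Longrightarrow> Y \<in> carrier_mat n n \<Longrightarrow>
   trace_block (mbr X Y) = mbr (trace_block X) (trace_block Y)"
  unfolding trace_block_def mbr_def
  by (intro eq_matI) (auto simp: mat_trace_mbr[unfolded mbr_def] scalar_prod_def)

definition split_trace :: "complex mat list \<Rightarrow> complex mat list" where
  "split_trace xs = map traceless_part xs @ map trace_block xs"

definition join_trace :: "nat \<Rightarrow> complex mat list \<Rightarrow> complex mat list" where
  "join_trace m ys = map2 add_scalar (take m ys) (drop m ys)"

lemma join_trace_append: "length xs = m \<Longrightarrow> join_trace m (xs @ ys) = map2 add_scalar xs ys"
  unfolding join_trace_def by simp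

lemma split_trace_map2:
  assumes xs: "xs \<in> dsum (map u_alg ns)" and ys: "ys \<in> dsum (map u_alg ns)"
    and traceless: "\<And>n X Y. X \<in> carrier_mat n n \<Longrightarrow> Y \<in> carrier_mat n n \<Longrightarrow>
      traceless_part (g X Y) = g (traceless_part X) (traceless_part Y)"
    and trace: "\<And>n X Y. X \<in> carrier_mat n n \<Longrightarrow> Y \<in> carrier_mat n n \<Longrightarrow>
      trace_block (g X Y) = g (trace_block X) (trace_block Y)"
  shows "split_trace (map2 g xs ys) = map2 g (split_trace xs) (split_trace ys)"
proof -
  have len: "length xs = length ys" using xs ys by (simp add: dsum_map_iff)
  have cx: "xs ! i \<in> carrier_mat (ns ! i) (ns ! i)" and cy: "ys ! i \<in> carrier_mat (ns ! i) (ns ! i)"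
    if "i < length xs" for i
    using xs ys that len by (auto simp: dsum_map_iff intro: u_alg_carrier)
  have "map traceless_part (map2 g xs ys) = map2 g (map traceless_part xs) (map traceless_part ys)"
    by (intro map_map2_hom len) (metis cx cy traceless)
  moreover have "map trace_block (map2 g xs ys) = map2 g (map trace_block xs) (map trace_block ys)"
    by (intro map_map2_hom len) (metis cx cy trace)
  ultimately show ?thesis
    unfolding split_trace_def using len by simp
qed

lemma split_trace_ladd:
  assumes "xs \<in> dsum (map u_alg ns)" "ys \<in> dsum (map u_alg ns)"
  shows "split_trace (ladd xs ys) = ladd (split_trace xs) (split_trace ys)"
  unfolding ladd_def
  by (rule split_trace_map2[where g = "(+)", OF assms traceless_part_add trace_block_add])

lemma split_trace_lbr:
  assumes "xs \<in> dsum (map u_alg ns)" "ys \<in> dsum (map u_alg ns)"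
  shows "split_trace (lbr xs ys) = lbr (split_trace xs) (split_trace ys)"
  unfolding lbr_def
  by (rule split_trace_map2[where g = mbr, OF assms traceless_part_mbr trace_block_mbr])

lemma split_trace_lsc:
  assumes xs: "xs \<in> dsum (map u_alg ns)"
  shows "split_trace (lsc c xs) = lsc c (split_trace xs)"
proof -
  have "traceless_part (rsc c x) = rsc c (traceless_part x) \<and> trace_block (rsc c x) = rsc c (trace_block x)"
    if "x \<in> set xs" for x
  proof -
    obtain i where "i < length xs" "x = xs ! i" using \<open>x \<in> set xs\<close> by (auto simp: in_set_conv_nth)
    then have "x \<in> carrier_mat (ns ! i) (ns ! i)" using xs by (simp add: dsum_map_iff u_alg_carrier)
    then show ?thesis unfolding rsc_def by (simp add: traceless_part_smult trace_block_smult)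
  qed
  then show ?thesis
    unfolding lsc_def split_trace_def by (simp add: map_eq_conv)
qed

context
  fixes ns :: "nat list"
  assumes pos: "\<forall>n\<in>set ns. 0 < n"
begin

lemma split_trace_in_dsum:
  assumes xs: "xs \<in> dsum (map u_alg ns)"
  shows "split_trace xs \<in> dsum (map su_alg ns @ replicate (length ns) (u_alg 1))"
proof -
  have "map traceless_part xs \<in> dsum (map su_alg ns)"
    using xs pos by (auto simp: dsum_map_iff traceless_part_in_su_alg)
  moreover have "map trace_block xs \<in> dsum (replicate (length ns) (u_alg 1))"
    using xs trace_block_in_u_alg unfolding dsum_map_iff dsum_replicate_iff
    by (auto simp del: One_nat_def simp: in_set_conv_nth) blast
  moreover have "length (map traceless_part xs) = length (map su_alg ns)"
    using xs by (simp add: dsum_map_iff)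
  ultimately show ?thesis
    unfolding split_trace_def by (simp add: dsum_append_iff)
qed

lemma join_trace_in_dsum:
  assumes ys: "ys \<in> dsum (map su_alg ns @ replicate (length ns) (u_alg 1))"
  shows "join_trace (length ns) ys \<in> dsum (map u_alg ns)"
proof -
  obtain as bs where "ys = as @ bs" "length as = length ns"
    and as: "as \<in> dsum (map su_alg ns)" and bs: "bs \<in> dsum (replicate (length ns) (u_alg 1))"
    using ys by (elim dsum_appendE) simp
  then show ?thesis
    using as bs unfolding dsum_map_iff dsum_replicate_iff
    by (auto simp del: One_nat_def simp: join_trace_append intro!: add_scalar_in_u_alg)
qed

lemma join_trace_split_trace:
  assumes xs: "xs \<in> dsum (map u_alg ns)"
  shows "join_trace (length ns) (split_trace xs) = xs"
proof -
  have "add_scalar (traceless_part (xs ! i)) (trace_block (xs ! i)) = xs ! i" if "i < length ns" for i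
    using xs pos that unfolding dsum_map_iff by (metis add_scalar_traceless_part nth_mem u_alg_carrier)
  then have "map2 add_scalar (map traceless_part xs) (map trace_block xs) = xs"
    using xs by (intro nth_equalityI) (auto simp: dsum_map_iff)
  then show ?thesis
    using xs unfolding split_trace_def by (simp add: join_trace_append dsum_map_iff)
qed

lemma split_trace_join_trace:
  assumes ys: "ys \<in> dsum (map su_alg ns @ replicate (length ns) (u_alg 1))"
  shows "split_trace (join_trace (length ns) ys) = ys"
proof -
  obtain as bs where ys_eq: "ys = as @ bs" and "length as = length ns"
    and as: "as \<in> dsum (map su_alg ns)" and bs: "bs \<in> dsum (replicate (length ns) (u_alg 1))"
    using ys by (elim dsum_appendE) simp
  have "map traceless_part (map2 add_scalar as bs) = as"
    using as bs pos by (intro nth_equalityI)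
      (auto simp: dsum_map_iff dsum_replicate_iff traceless_part_add_scalar)
  moreover have "trace_block (add_scalar (as ! i) (bs ! i)) = bs ! i" if "i < length ns" for i
    using as bs pos that unfolding dsum_map_iff dsum_replicate_iff
    by (metis trace_block_add_scalar nth_mem subsetD u_alg_carrier)
  then have "map trace_block (map2 add_scalar as bs) = bs"
    using as bs by (intro nth_equalityI) (auto simp: dsum_map_iff dsum_replicate_iff)
  ultimately show ?thesis
    unfolding ys_eq split_trace_def using \<open>length as = length ns\<close> by (simp add: join_trace_append)
qed

lemma list_lie_iso_split_trace:
  "list_lie_iso split_trace (dsum (map u_alg ns))
     (dsum (map su_alg ns @ replicate (length ns) (u_alg 1)))"
  unfolding list_lie_iso_def
  by (auto intro!: bij_betw_byWitness[where f' = "join_trace (length ns)"]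
      simp del: One_nat_def simp: split_trace_in_dsum join_trace_in_dsum join_trace_split_trace split_trace_join_trace
        split_trace_ladd split_trace_lsc split_trace_lbr)

end

section \<open>A real basis of D(N,k)\<close>

text \<open>The pair \<open>(i, j)\<close> gives \<open>E\<^sub>i\<^sub>j - E\<^sub>j\<^sub>i\<close> if \<open>i < j\<close>, \<open>\<i>(E\<^sub>i\<^sub>j + E\<^sub>j\<^sub>i)\<close> if \<open>j < i\<close>
  and \<open>\<i>E\<^sub>i\<^sub>i\<close> if \<open>i = j\<close>.\<close>

definition skew_basis :: "nat \<Rightarrow> nat \<times> nat \<Rightarrow> complex mat" where
  "skew_basis N p = mat N N (\<lambda>(a, b).
     (if p = (a, b) then (if a < b then 1 else \<i>) else 0) +
     (if p = (b, a) then (if b < a then -1 else if a < b then \<i> else 0) else 0))"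

definition skew_coord :: "complex mat \<Rightarrow> nat \<times> nat \<Rightarrow> real" where
  "skew_coord A p = (if fst p < snd p then Re (A $$ p) else Im (A $$ p))"

definition class_pairs :: "nat \<Rightarrow> nat \<Rightarrow> (nat \<times> nat) list" where
  "class_pairs N k = filter (\<lambda>(i, j). i mod k = j mod k) (List.product [0..<N] [0..<N])"

lemma set_class_pairs: "set (class_pairs N k) = {(i, j). i < N \<and> j < N \<and> i mod k = j mod k}"
  unfolding class_pairs_def by auto

lemma distinct_class_pairs: "distinct (class_pairs N k)"
  unfolding class_pairs_def by (intro distinct_filter distinct_product) auto

lemma skew_basis_in_D_alg:
  assumes "p \<in> set (class_pairs N k)"
  shows "skew_basis N p \<in> D_alg N k"
  unfolding D_alg_iff
proof
  show "skew_basis N p \<in> u_alg N"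
  proof (rule u_algI)
    fix a b assume "a < N" "b < N"
    moreover obtain i j where p: "p = (i, j)" by fastforce
    ultimately show "skew_basis N p $$ (a, b) = - cnj (skew_basis N p $$ (b, a))"
      unfolding skew_basis_def p
      by (cases "a = i"; cases "b = j"; cases "a = j"; cases "b = i"; cases "a < b"; cases "b < a") auto
  qed (simp add: skew_basis_def)
  show "mod_supported k (skew_basis N p)"
    unfolding mod_supported_def
  proof (intro allI impI)
    fix a b assume ab: "a < dim_row (skew_basis N p)" "b < dim_col (skew_basis N p)" "a mod k \<noteq> b mod k"
    then have "p \<noteq> (a, b)" "p \<noteq> (b, a)"
      using assms unfolding set_class_pairs by auto
    then show "skew_basis N p $$ (a, b) = 0"
      using ab by (simp add: skew_basis_def)
  qed
qed

lemma index_rlincomb_skew_basis: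
  assumes "a < N" "b < N"
  shows "rlincomb N c (map (skew_basis N) qs) $$ (a, b) =
    of_real (\<Sum>l<length qs. if qs ! l = (a, b) then c l else 0) * (if a < b then 1 else \<i>) +
    of_real (\<Sum>l<length qs. if qs ! l = (b, a) then c l else 0) *
      (if b < a then -1 else if a < b then \<i> else 0)"
proof -
  define \<alpha> :: complex where "\<alpha> = (if a < b then 1 else \<i>)"
  define \<beta> :: complex where "\<beta> = (if b < a then -1 else if a < b then \<i> else 0)"
  have scale_ifs: "of_real x * ((if P then \<alpha> else 0) + (if Q then \<beta> else 0)) =
      of_real (if P then x else 0) * \<alpha> + of_real (if Q then x else 0) * \<beta>" for x P Q
    by (simp add: distrib_left)
  have "rlincomb N c (map (skew_basis N) qs) $$ (a, b) = (\<Sum>l<length qs.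
      of_real (c l) * ((if qs ! l = (a, b) then \<alpha> else 0) + (if qs ! l = (b, a) then \<beta> else 0)))"
    using assms unfolding rlincomb_def skew_basis_def \<alpha>_def \<beta>_def by simp
  also have "\<dots> = (\<Sum>l<length qs. of_real (if qs ! l = (a, b) then c l else 0) * \<alpha>
      + of_real (if qs ! l = (b, a) then c l else 0) * \<beta>)"
    unfolding scale_ifs ..
  also have "\<dots> = of_real (\<Sum>l<length qs. if qs ! l = (a, b) then c l else 0) * \<alpha> +
      of_real (\<Sum>l<length qs. if qs ! l = (b, a) then c l else 0) * \<beta>"
    by (simp only: sum.distrib sum_distrib_right of_real_sum)
  finally show ?thesis unfolding \<alpha>_def \<beta>_def .
qed

lemma sum_nth_eq_distinct:
  assumes "distinct qs" "m < length qs"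
  shows "(\<Sum>l<length qs. if qs ! l = qs ! m then f l else 0) = f m"
  using assms by (simp add: nth_eq_iff_index_eq)

lemma skew_coord_expansion:
  assumes A: "A \<in> u_alg N" and "a < N" "b < N"
  shows "of_real (skew_coord A (a, b)) * (if a < b then 1 else \<i>) +
    of_real (skew_coord A (b, a)) * (if b < a then -1 else if a < b then \<i> else 0) = A $$ (a, b)"
proof -
  have "A $$ (b, a) = - cnj (A $$ (a, b))" using u_alg_skew[OF A \<open>b < N\<close> \<open>a < N\<close>] .
  then have re: "Re (A $$ (b, a)) = - Re (A $$ (a, b))" and im: "Im (A $$ (b, a)) = Im (A $$ (a, b))"
    by simp_all
  consider "a < b" | "b < a" | "a = b" by linarith
  then show ?thesis
  proof cases
    case 3
    then have "Re (A $$ (a, b)) = 0" using re by simp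
    then show ?thesis using 3 by (simp add: skew_coord_def complex_eq_iff)
  qed (use re im in \<open>auto simp: skew_coord_def complex_eq_iff\<close>)
qed

lemma skew_coord_rlincomb:
  assumes "distinct qs" "m < length qs" "qs ! m = (a, b)" "a < N" "b < N"
  shows "skew_coord (rlincomb N c (map (skew_basis N) qs)) (a, b) = c m"
proof -
  have "(\<Sum>l<length qs. if qs ! l = (a, b) then c l else 0) = c m"
    using sum_nth_eq_distinct[OF assms(1,2)] assms(3) by simp
  then show ?thesis
    using assms(4,5) by (auto simp: skew_coord_def index_rlincomb_skew_basis)
qed

lemma rlincomb_skew_coord_class_pairs:
  assumes A: "A \<in> D_alg N k"
  shows "rlincomb N (\<lambda>l. skew_coord A (class_pairs N k ! l)) (map (skew_basis N) (class_pairs N k)) = A"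
    (is "rlincomb N ?c (map (skew_basis N) ?qs) = A")
proof (rule eq_matI)
  fix a b assume "a < dim_row A" "b < dim_col A"
  then have ab: "a < N" "b < N" using D_alg_carrier[OF A] by auto
  show "rlincomb N ?c (map (skew_basis N) ?qs) $$ (a, b) = A $$ (a, b)"
  proof (cases "a mod k = b mod k")
    case True
    then have "(a, b) \<in> set ?qs" "(b, a) \<in> set ?qs"
      using ab by (simp_all add: set_class_pairs)
    then obtain m m' where m: "m < length ?qs" "?qs ! m = (a, b)" and m': "m' < length ?qs" "?qs ! m' = (b, a)"
      by (metis in_set_conv_nth)
    have "(\<Sum>l<length ?qs. if ?qs ! l = (a, b) then ?c l else 0) = skew_coord A (a, b)"
      using sum_nth_eq_distinct[OF distinct_class_pairs m(1), of ?c] m by simp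
    moreover have "(\<Sum>l<length ?qs. if ?qs ! l = (b, a) then ?c l else 0) = skew_coord A (b, a)"
      using sum_nth_eq_distinct[OF distinct_class_pairs m'(1), of ?c] m' by simp
    ultimately show ?thesis
      using skew_coord_expansion[of A N a b] A ab by (simp add: index_rlincomb_skew_basis D_alg_iff)
  next
    case False
    then have "(a, b) \<notin> set ?qs" "(b, a) \<notin> set ?qs"
      by (simp_all add: set_class_pairs)
    then have "(\<Sum>l<length ?qs. if ?qs ! l = (a, b) then ?c l else 0) = 0"
      "(\<Sum>l<length ?qs. if ?qs ! l = (b, a) then ?c l else 0) = 0"
      by (auto intro!: sum.neutral) (metis nth_mem)+
    moreover have "A $$ (a, b) = 0"
      using D_alg_zero[OF A ab False] .
    ultimately show ?thesis
      using ab by (simp add: index_rlincomb_skew_basis)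
  qed
qed (use D_alg_carrier[OF A] in \<open>simp_all add: rlincomb_def\<close>)

lemma length_class_pairs:
  assumes k: "0 < k"
  shows "length (class_pairs N k) = k * (N div k)\<^sup>2 + 2 * (N mod k) * (N div k) + N mod k"
proof -
  define C where "C c = {l. l < N \<and> l mod k = c}" for c
  define d where "d = N div k"
  define r where "r = N mod k"
  have r: "r < k" unfolding r_def using k by simp
  have "length (class_pairs N k) = card (\<Union>c<k. C c \<times> C c)"
    unfolding distinct_card[OF distinct_class_pairs, symmetric]
    by (rule arg_cong[where f = card]) (auto simp: set_class_pairs C_def k)
  also have "\<dots> = (\<Sum>c<k. card (C c \<times> C c))"
    by (rule card_UN_disjoint) (auto simp: C_def)
  also have "\<dots> = (\<Sum>c<k. if c < r then (d + 1)\<^sup>2 else d\<^sup>2)"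
    by (intro sum.cong) (auto simp: card_cartesian_product C_def card_residue_class class_size_def
        d_def r_def power2_eq_square)
  also have "\<dots> = r * (d + 1)\<^sup>2 + (k - r) * d\<^sup>2"
  proof -
    have "{..<k} \<inter> {c. c < r} = {..<r}" "{..<k} \<inter> - {c. c < r} = {r..<k}"
      using r by auto
    then show ?thesis by (simp add: sum.If_cases)
  qed
  also have "\<dots> = k * d\<^sup>2 + 2 * r * d + r"
  proof -
    obtain s where "k = r + s" using r less_imp_add_positive by blast
    then show ?thesis by (simp add: algebra_simps power2_eq_square)
  qed
  finally show ?thesis unfolding d_def r_def .
qed

lemma real_dim_D_alg:
  assumes "0 < k"
  shows "real_dim_eq N (D_alg N k) (k * (N div k)\<^sup>2 + 2 * (N mod k) * (N div k) + N mod k)"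
  unfolding real_dim_eq_def
proof (intro exI conjI allI impI)
  let ?qs = "class_pairs N k"
  show "length (map (skew_basis N) ?qs) = k * (N div k)\<^sup>2 + 2 * (N mod k) * (N div k) + N mod k"
    using length_class_pairs[OF assms] by simp
  show "set (map (skew_basis N) ?qs) \<subseteq> D_alg N k"
    using skew_basis_in_D_alg by auto
  fix c m assume zero: "rlincomb N c (map (skew_basis N) ?qs) = 0\<^sub>m N N"
    and "m < k * (N div k)\<^sup>2 + 2 * (N mod k) * (N div k) + N mod k"
  then have m: "m < length ?qs" using length_class_pairs[OF assms] by simp
  obtain a b where ab: "?qs ! m = (a, b)" by fastforce
  then have "a < N" "b < N" using nth_mem[OF m] by (auto simp: set_class_pairs)
  then show "c m = 0"
    using skew_coord_rlincomb[OF distinct_class_pairs m ab, of N c] zero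
    by (simp add: skew_coord_def split: if_splits)
next
  show "\<forall>A\<in>D_alg N k. \<exists>c. A = rlincomb N c (map (skew_basis N) (class_pairs N k))"
    using rlincomb_skew_coord_class_pairs by metis
qed

theorem mainTheorem3:
  fixes N k :: nat
  assumes "N \<ge> 1" and "0 < k" and "k \<le> N"
  defines "d \<equiv> N div k" and "r \<equiv> N - k * (N div k)"
  shows "real_lie_subalg_u (D_alg N k) N
    \<and> lie_isomorphic (D_alg N k)
        (dsum (replicate (k - r) (u_alg d) @ replicate r (u_alg (d + 1))))
    \<and> lie_isomorphic (D_alg N k)
        (dsum (replicate (k - r) (su_alg d) @ replicate r (su_alg (d + 1))
               @ replicate k (u_alg 1)))
    \<and> real_dim_eq N (D_alg N k) (k * d ^ 2 + 2 * r * d + r)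
    \<and> k * d ^ 2 + 2 * r * d + r = d * (N + r) + r"
proof -
  have k: "0 < k" by fact
  have r: "r = N mod k" unfolding r_def by (simp add: minus_mult_div_eq_mod)
  have N: "N = k * d + r" unfolding r d_def by simp
  have "0 < d" unfolding d_def using assms(2,3) by (simp add: div_greater_zero_iff)
  then have pos: "\<forall>n\<in>set (block_sizes N k). 0 < n"
    unfolding block_sizes_def d_def by auto
  have u_blocks: "replicate (k - r) (u_alg d) @ replicate r (u_alg (d + 1)) = map u_alg (block_sizes N k)"
    unfolding block_sizes_def r d_def by simp
  have su_blocks: "replicate (k - r) (su_alg d) @ replicate r (su_alg (d + 1)) @ replicate k (u_alg 1)
      = map su_alg (block_sizes N k) @ replicate (length (block_sizes N k)) (u_alg 1)"
    unfolding length_block_sizes[OF k] unfolding block_sizes_def r d_def by simp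
  have blocks: "lie_iso (blocks N k) (D_alg N k) (dsum (map u_alg (block_sizes N k)))"
    by (rule lie_iso_blocks[OF k])
  moreover have "lie_iso (split_trace \<circ> blocks N k) (D_alg N k)
      (dsum (map su_alg (block_sizes N k) @ replicate (length (block_sizes N k)) (u_alg 1)))"
    by (rule lie_iso_comp[OF blocks list_lie_iso_split_trace[OF pos]])
  moreover have "real_dim_eq N (D_alg N k) (k * d ^ 2 + 2 * r * d + r)"
    unfolding r d_def by (rule real_dim_D_alg[OF k])
  moreover have "k * d ^ 2 + 2 * r * d + r = d * (N + r) + r"
    unfolding N by (simp add: algebra_simps power2_eq_square)
  ultimately show ?thesis
    unfolding u_blocks su_blocks lie_isomorphic_def using D_alg_real_lie_subalg by blast
qed

end
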